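(* Let $V=\{0,1,2,3,4\}$ (so $n=3$), with nominal durations $\bar\theta_1=\bar\theta_2=\bar\theta_3=1$, maximum deviations $\hat\theta_1=\hat\theta_2=\hat\theta_3=1$, $\bar\theta_0=\hat\theta_0=\bar\theta_4=\hat\theta_4=0$, budget $\Gamma=1$, and let $y\in\{0,1\}^{V\times V}$ be given by $y_{ij}=1$ if and only if $(i,j)\in\{(0,1),(1,2),(1,3),(2,4),(3,4)\}$. For $M>0$ consider the mixed-integer program \[ \max\ \sum_{(i,j)\in V^2}\bigl(\bar\theta_i\alpha_{ij}+\hat\theta_i w_{ij}-M(1-y_{ij})\alpha_{ij}\bigr) \] subject to $\sum_{(j,i)\in V^2}\alpha_{ji}-\sum_{(i,j)\in V^2}\alpha_{ij}=0$ for all $j\in V$ (flow conservation: total flow into $j$ equals total flow out of $j$); $\sum_{i\in V}\alpha_{0i}=1$; $\sum_{i\in V}\alpha_{i4}=1$; $w_{ij}\le\delta_i$ and $w_{ij}\le\alpha_{ij}$ for all $(i,j)\in V^2$; $\sum_{i\in V}\delta_i\le\Gamma$; $0\le\delta_i\le1$ for all $i\in V$; $\alpha_{ij}\in\{0,1\}$ and $w_{ij}\ge0$ for all $(i,j)\in V^2$. Then for all sufficiently large $M$, the optimal value of the linear relaxation of this program (obtained by replacing $\alpha_{ij}\in\{0,1\}$ with $\alpha_{ij}\in[0,1]$) is strictly greater than the optimal value of the mixed-integer program itself; in particular the program is not equivalent to its linear relaxation.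
   Context: This program is the linearised adversarial sub-problem of the two-stage robust resource-constrained project scheduling problem: $V=\{0,\dots,n+1\}$ is the set of activities with dummy source $0$ and dummy sink $n+1$, $y_{ij}=1$ indicates that $(i,j)$ is a precedence arc of the (extended) project network, activity $i$ has duration $\bar\theta_i+\delta_i\hat\theta_i$, and an adversary chooses the delay fractions $\delta$ (with budget $\Gamma$) together with a unit flow $\alpha$ from the source to the sink so as to maximise the total duration along the flow. *)

theory Defs
  imports Complex_Main
begin

definition V :: "nat set" where "V = {0..4}"

definition theta_bar :: "nat \<Rightarrow> real" where
  "theta_bar i = (if i \<in> {1,2,3} then 1 else 0)"

definition theta_hat :: "nat \<Rightarrow> real" where
  "theta_hat i = (if i \<in> {1,2,3} then 1 else 0)"

definition Gamma :: real where "Gamma = 1"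

definition y :: "nat \<Rightarrow> nat \<Rightarrow> real" where
  "y i j = (if (i, j) \<in> {(0,1),(1,2),(1,3),(2,4),(3,4)} then 1 else 0)"

definition objective :: "real \<Rightarrow> (nat \<Rightarrow> nat \<Rightarrow> real) \<Rightarrow> (nat \<Rightarrow> nat \<Rightarrow> real) \<Rightarrow> (nat \<Rightarrow> real) \<Rightarrow> real" where
  "objective M \<alpha> w \<delta> =
     (\<Sum>(i, j)\<in>V \<times> V. theta_bar i * \<alpha> i j + theta_hat i * w i j - M * (1 - y i j) * \<alpha> i j)"

definition common_constraints :: "(nat \<Rightarrow> nat \<Rightarrow> real) \<Rightarrow> (nat \<Rightarrow> nat \<Rightarrow> real) \<Rightarrow> (nat \<Rightarrow> real) \<Rightarrow> bool" where
  "common_constraints \<alpha> w \<delta> \<longleftrightarrow>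
     (\<forall>j\<in>V. (\<Sum>i\<in>V. \<alpha> j i) - (\<Sum>i\<in>V. \<alpha> i j) = 0) \<and>
     (\<Sum>i\<in>V. \<alpha> 0 i) = 1 \<and>
     (\<Sum>i\<in>V. \<alpha> i 4) = 1 \<and>
     (\<forall>i\<in>V. \<forall>j\<in>V. w i j \<le> \<delta> i \<and> w i j \<le> \<alpha> i j) \<and>
     (\<Sum>i\<in>V. \<delta> i) \<le> Gamma \<and>
     (\<forall>i\<in>V. 0 \<le> \<delta> i \<and> \<delta> i \<le> 1) \<and>
     (\<forall>i\<in>V. \<forall>j\<in>V. 0 \<le> w i j)"

definition MIP_feasible :: "((nat \<Rightarrow> nat \<Rightarrow> real) \<times> (nat \<Rightarrow> nat \<Rightarrow> real) \<times> (nat \<Rightarrow> real)) set" where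
  "MIP_feasible = {(\<alpha>, w, \<delta>). common_constraints \<alpha> w \<delta> \<and> (\<forall>i\<in>V. \<forall>j\<in>V. \<alpha> i j \<in> {0, 1})}"

definition LP_feasible :: "((nat \<Rightarrow> nat \<Rightarrow> real) \<times> (nat \<Rightarrow> nat \<Rightarrow> real) \<times> (nat \<Rightarrow> real)) set" where
  "LP_feasible = {(\<alpha>, w, \<delta>). common_constraints \<alpha> w \<delta> \<and> (\<forall>i\<in>V. \<forall>j\<in>V. 0 \<le> \<alpha> i j \<and> \<alpha> i j \<le> 1)}"

definition MIP_opt :: "real \<Rightarrow> real" where
  "MIP_opt M = Sup ((\<lambda>(\<alpha>, w, \<delta>). objective M \<alpha> w \<delta>) ` MIP_feasible)"

definition LP_opt :: "real \<Rightarrow> real" where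
  "LP_opt M = Sup ((\<lambda>(\<alpha>, w, \<delta>). objective M \<alpha> w \<delta>) ` LP_feasible)"

end

theory Submission
  imports Defs
begin

text \<open>
  Flow conservation is imposed at every node, source and sink included, so \<open>\<alpha>\<close> is a circulation
  and the flow entering the source, one unit, runs on arcs outside the network and costs
  \<open>M\<close> per unit. A fractional flow can split at activity 1 and spread the delay budget over both
  branches, reaching \<open>7/2 - M\<close>. For an integral flow \<open>w\<^sub>i\<^sub>j \<le> \<delta>\<^sub>i \<alpha>\<^sub>i\<^sub>j\<close>, and weak LP duality
  for circulations with a longest-path potential bounds the objective by \<open>(3 - M)\<close> times the
  penalised flow, hence by \<open>3 - M\<close>.
\<close>

lemma circulation_weighted_sum_le:
  fixes S :: "'a set" and \<alpha> c y :: "'a \<Rightarrow> 'a \<Rightarrow> real" and \<pi> :: "'a \<Rightarrow> real" and K :: real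
  assumes circulation: "\<forall>j\<in>S. (\<Sum>i\<in>S. \<alpha> j i) = (\<Sum>i\<in>S. \<alpha> i j)"
    and nonneg: "\<forall>i\<in>S. \<forall>j\<in>S. 0 \<le> \<alpha> i j"
    and potential: "\<forall>i\<in>S. \<forall>j\<in>S. c i j \<le> \<pi> j - \<pi> i + K * (1 - y i j)"
  shows "(\<Sum>(i, j)\<in>S \<times> S. c i j * \<alpha> i j) \<le> K * (\<Sum>(i, j)\<in>S \<times> S. (1 - y i j) * \<alpha> i j)"
proof -
  have "(\<Sum>(i, j)\<in>S \<times> S. \<pi> j * \<alpha> i j) = (\<Sum>i\<in>S. \<Sum>j\<in>S. \<pi> j * \<alpha> i j)"
    by (rule sum.cartesian_product[symmetric])
  also have "\<dots> = (\<Sum>j\<in>S. \<pi> j * (\<Sum>i\<in>S. \<alpha> i j))"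
    by (subst sum.swap) (simp add: sum_distrib_left)
  also have "\<dots> = (\<Sum>i\<in>S. \<pi> i * (\<Sum>j\<in>S. \<alpha> i j))"
    using circulation by simp
  also have "\<dots> = (\<Sum>(i, j)\<in>S \<times> S. \<pi> i * \<alpha> i j)"
    by (simp add: sum.cartesian_product sum_distrib_left)
  finally have telescoping: "(\<Sum>(i, j)\<in>S \<times> S. (\<pi> j - \<pi> i) * \<alpha> i j) = 0"
    by (simp add: left_diff_distrib sum_subtractf case_prod_beta)
  have "(\<Sum>(i, j)\<in>S \<times> S. c i j * \<alpha> i j)
      \<le> (\<Sum>(i, j)\<in>S \<times> S. (\<pi> j - \<pi> i + K * (1 - y i j)) * \<alpha> i j)"
    using nonneg potential by (intro sum_mono) (auto intro!: mult_right_mono)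
  also have "\<dots> = (\<Sum>(i, j)\<in>S \<times> S. (\<pi> j - \<pi> i) * \<alpha> i j)
      + K * (\<Sum>(i, j)\<in>S \<times> S. (1 - y i j) * \<alpha> i j)"
    by (simp add: distrib_right sum.distrib sum_distrib_left mult.assoc case_prod_beta)
  also have "\<dots> = K * (\<Sum>(i, j)\<in>S \<times> S. (1 - y i j) * \<alpha> i j)"
    using telescoping by simp
  finally show ?thesis .
qed

lemma sum_V: "(\<Sum>i\<in>V. f i) = f 0 + f 1 + f 2 + f 3 + (f 4 :: real)"
  by (simp add: V_def eval_nat_numeral atLeast0_atMost_Suc add.commute add.left_commute)

lemma ball_V: "(\<forall>i\<in>V. P i) \<longleftrightarrow> P 0 \<and> P 1 \<and> P 2 \<and> P 3 \<and> P 4"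
  by (simp add: V_def atLeast0_atMost_Suc eval_nat_numeral conj_ac)

lemma sum_V_times_V: "(\<Sum>(i, j)\<in>V \<times> V. f i j) = (\<Sum>i\<in>V. \<Sum>j\<in>V. (f i j :: real))"
  by (simp add: sum.cartesian_product V_def)

definition penalised_flow :: "(nat \<Rightarrow> nat \<Rightarrow> real) \<Rightarrow> real" where
  "penalised_flow \<alpha> = (\<Sum>(i, j)\<in>V \<times> V. (1 - y i j) * \<alpha> i j)"

lemma objective_eq:
  "objective M \<alpha> w \<delta> =
     (\<Sum>(i, j)\<in>V \<times> V. theta_bar i * \<alpha> i j + theta_hat i * w i j) - M * penalised_flow \<alpha>"
  unfolding objective_def penalised_flow_def sum_distrib_left sum_subtractf[symmetric]
  by (rule sum.cong) (auto simp: algebra_simps)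

lemma common_constraints_circulation:
  assumes "common_constraints \<alpha> w \<delta>"
  shows "\<forall>j\<in>V. (\<Sum>i\<in>V. \<alpha> j i) = (\<Sum>i\<in>V. \<alpha> i j)"
  using assms by (simp add: common_constraints_def)

lemma penalised_flow_ge_1:
  assumes "common_constraints \<alpha> w \<delta>" and nonneg: "\<forall>i\<in>V. \<forall>j\<in>V. 0 \<le> \<alpha> i j"
  shows "penalised_flow \<alpha> \<ge> 1"
proof -
  have "1 = (\<Sum>i\<in>V. \<alpha> 0 i)"
    using assms(1) by (simp add: common_constraints_def)
  also have "\<dots> = (\<Sum>i\<in>V. \<alpha> i 0)"
    using common_constraints_circulation[OF assms(1)] by (simp add: V_def)
  also have "\<dots> = (\<Sum>(i, j)\<in>V \<times> {0}. (1 - y i j) * \<alpha> i j)"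
    by (simp add: y_def sum.cartesian_product[symmetric])
  also have "\<dots> \<le> penalised_flow \<alpha>"
    unfolding penalised_flow_def using nonneg
    by (intro sum_mono2) (auto simp: V_def y_def)
  finally show ?thesis .
qed

lemma MIP_objective_le:
  assumes "(\<alpha>, w, \<delta>) \<in> MIP_feasible" and "M \<ge> 3"
  shows "objective M \<alpha> w \<delta> \<le> 3 - M"
proof -
  have cc: "common_constraints \<alpha> w \<delta>" and binary: "\<forall>i\<in>V. \<forall>j\<in>V. \<alpha> i j \<in> {0, 1}"
    using assms(1) by (auto simp: MIP_feasible_def)
  have nonneg: "\<forall>i\<in>V. \<forall>j\<in>V. 0 \<le> \<alpha> i j"
    using binary by force
  have w_le: "w i j \<le> \<delta> i * \<alpha> i j" if "i \<in> V" "j \<in> V" for i j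
  proof -
    have "w i j \<le> \<delta> i" "w i j \<le> \<alpha> i j"
      using cc that by (auto simp: common_constraints_def)
    moreover have "\<alpha> i j = 0 \<or> \<alpha> i j = 1"
      using binary that by auto
    ultimately show ?thesis
      by auto
  qed
  have \<delta>: "\<forall>i\<in>V. 0 \<le> \<delta> i \<and> \<delta> i \<le> 1" "\<delta> 0 + \<delta> 1 + \<delta> 2 + \<delta> 3 + \<delta> 4 \<le> 1"
    using cc by (auto simp: common_constraints_def sum_V Gamma_def)
  define c where "c i j = theta_bar i + theta_hat i * \<delta> i" for i j :: nat
  \<comment> \<open>longest-path potential for the arc weights \<open>c\<close> along the network \<open>y\<close>\<close>
  define \<pi> where "\<pi> i = (if i = 2 \<or> i = 3 then 1 + \<delta> 1
    else if i = 4 then 2 + \<delta> 1 + \<delta> 2 + \<delta> 3 else 0)" for i :: nat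
  have "objective M \<alpha> w \<delta> \<le> (\<Sum>(i, j)\<in>V \<times> V. c i j * \<alpha> i j) - M * penalised_flow \<alpha>"
    unfolding objective_eq c_def using w_le
    by (intro diff_right_mono sum_mono)
       (auto simp: theta_hat_def algebra_simps intro: mult_left_mono)
  also have "(\<Sum>(i, j)\<in>V \<times> V. c i j * \<alpha> i j) \<le> 3 * penalised_flow \<alpha>"
    unfolding penalised_flow_def
  proof (rule circulation_weighted_sum_le[where \<pi> = \<pi>])
    show "\<forall>i\<in>V. \<forall>j\<in>V. c i j \<le> \<pi> j - \<pi> i + 3 * (1 - y i j)"
      using \<delta> by (simp add: ball_V c_def \<pi>_def y_def theta_bar_def theta_hat_def)
  qed (use nonneg common_constraints_circulation[OF cc] in \<open>auto simp: V_def\<close>)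
  also have "3 * penalised_flow \<alpha> - M * penalised_flow \<alpha> \<le> 3 - M"
    using penalised_flow_ge_1[OF cc nonneg] \<open>M \<ge> 3\<close>
    by (metis left_diff_distrib mult.right_neutral mult_left_mono_neg diff_le_0_iff_le)
  finally show ?thesis
    by simp
qed

lemma LP_objective_le_50:
  assumes "(\<alpha>, w, \<delta>) \<in> LP_feasible" and "M \<ge> 0"
  shows "objective M \<alpha> w \<delta> \<le> 50"
proof -
  have "objective M \<alpha> w \<delta> \<le> (\<Sum>(i, j)\<in>V \<times> V. 2)"
    unfolding objective_def
  proof (intro sum_mono, clarify)
    fix i j assume "i \<in> V" "j \<in> V"
    then have "0 \<le> \<alpha> i j" "\<alpha> i j \<le> 1" "w i j \<le> \<alpha> i j"
      using assms(1) by (auto simp: LP_feasible_def common_constraints_def)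
    moreover have "0 \<le> M * (1 - y i j) * \<alpha> i j"
      using \<open>M \<ge> 0\<close> \<open>0 \<le> \<alpha> i j\<close> by (simp add: y_def)
    ultimately show "theta_bar i * \<alpha> i j + theta_hat i * w i j - M * (1 - y i j) * \<alpha> i j \<le> 2"
      by (auto simp: theta_bar_def theta_hat_def)
  qed
  also have "\<dots> = 50"
    by (simp add: V_def)
  finally show ?thesis .
qed

definition \<alpha>_split :: "nat \<Rightarrow> nat \<Rightarrow> real" where
  "\<alpha>_split i j = (if (i, j) \<in> {(0, 1), (4, 0)} then 1
     else if (i, j) \<in> {(1, 2), (1, 3), (2, 4), (3, 4)} then 1/2 else 0)"

definition w_split :: "nat \<Rightarrow> nat \<Rightarrow> real" where
  "w_split i j = (if (i, j) \<in> {(1, 2), (1, 3)} then 1/2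
     else if (i, j) \<in> {(2, 4), (3, 4)} then 1/4 else 0)"

definition \<delta>_split :: "nat \<Rightarrow> real" where
  "\<delta>_split i = (if i = 1 then 1/2 else if i \<in> {2, 3} then 1/4 else 0)"

lemma split_LP_feasible: "(\<alpha>_split, w_split, \<delta>_split) \<in> LP_feasible"
  by (simp add: LP_feasible_def common_constraints_def sum_V ball_V
      \<alpha>_split_def w_split_def \<delta>_split_def Gamma_def)

lemma objective_split: "objective M \<alpha>_split w_split \<delta>_split = 7/2 - M"
  by (simp add: objective_def sum_V_times_V sum_V
      \<alpha>_split_def w_split_def theta_bar_def theta_hat_def y_def)

definition \<alpha>_path :: "nat \<Rightarrow> nat \<Rightarrow> real" where
  "\<alpha>_path i j = (if (i, j) \<in> {(0, 1), (1, 2), (2, 4), (4, 0)} then 1 else 0)"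

lemma path_MIP_feasible: "(\<alpha>_path, \<lambda>i j. 0, \<lambda>i. 0) \<in> MIP_feasible"
  by (simp add: MIP_feasible_def common_constraints_def sum_V ball_V \<alpha>_path_def Gamma_def)

theorem mainTheorem1:
  shows "\<exists>M0::real. \<forall>M. M > 0 \<and> M \<ge> M0 \<longrightarrow> LP_opt M > MIP_opt M"
proof (intro exI[of _ 3] allI impI)
  fix M :: real
  assume M: "M > 0 \<and> M \<ge> 3"
  let ?f = "\<lambda>(\<alpha>, w, \<delta>). objective M \<alpha> w \<delta>"
  have "MIP_opt M \<le> 3 - M"
    unfolding MIP_opt_def
    using path_MIP_feasible MIP_objective_le M by (intro cSup_least) auto
  moreover have "7/2 - M \<le> LP_opt M"
    unfolding LP_opt_def
  proof (rule cSup_upper)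
    show "7/2 - M \<in> ?f ` LP_feasible"
      using split_LP_feasible objective_split by (intro image_eqI) auto
    show "bdd_above (?f ` LP_feasible)"
      using LP_objective_le_50 M by (auto intro!: bdd_aboveI[of _ 50])
  qed
  ultimately show "LP_opt M > MIP_opt M"
    by linarith
qed

end
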